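(* Let $\epsilon\ge0$ and let $\mathcal A\in\mathrm{LDP}_\epsilon$. Then \[ \eta_{\mathrm{Tr}}(\mathcal A)\le\frac{e^\epsilon-1}{e^\epsilon+1}. \]
   Context: All Hilbert spaces are finite-dimensional. $E_\gamma(\rho\|\sigma)=\mathrm{Tr}(\rho-\gamma\sigma)_+$. A quantum channel (CPTP map) $\mathcal A$ from operators on $H_A$ to operators on $H_B$ is in $\mathrm{LDP}_\epsilon$ if $E_{e^\epsilon}(\mathcal A(\rho)\|\mathcal A(\sigma))=0$ for all states $\rho,\sigma$ on $H_A$. The trace-distance contraction coefficient is $\eta_{\mathrm{Tr}}(\mathcal A)=\sup_{\rho\ne\sigma}\frac{\|\mathcal A(\rho)-\mathcal A(\sigma)\|_1}{\|\rho-\sigma\|_1}$, the supremum over distinct states on $H_A$. *)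

theory Defs
  imports Complex_Main "HOL-Library.Extended_Real" "Jordan_Normal_Form.Matrix"
begin

definition mtrace :: "complex mat \<Rightarrow> complex" where
  "mtrace A = (\<Sum>i<dim_row A. A $$ (i, i))"

definition adj :: "complex mat \<Rightarrow> complex mat" where
  "adj A = mat (dim_col A) (dim_row A) (\<lambda>(i, j). cnj (A $$ (j, i)))"

definition hermitian :: "complex mat \<Rightarrow> bool" where
  "hermitian A \<longleftrightarrow> A = adj A"

definition psd :: "nat \<Rightarrow> complex mat \<Rightarrow> bool" where
  "psd n A \<longleftrightarrow> A \<in> carrier_mat n n \<and> hermitian A \<and>
     (\<forall>v \<in> carrier_vec n. 0 \<le> Re (conjugate v \<bullet> (A *\<^sub>v v)))"

definition density :: "nat \<Rightarrow> complex mat \<Rightarrow> bool" where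
  "density n \<rho> \<longleftrightarrow> psd n \<rho> \<and> mtrace \<rho> = 1"

definition pos_part :: "nat \<Rightarrow> complex mat \<Rightarrow> complex mat" where
  "pos_part n X = (THE P. psd n P \<and> psd n (P - X) \<and> P * (P - X) = 0\<^sub>m n n)"

definition E_gamma :: "nat \<Rightarrow> real \<Rightarrow> complex mat \<Rightarrow> complex mat \<Rightarrow> real" where
  "E_gamma n \<gamma> \<rho> \<sigma> = Re (mtrace (pos_part n (\<rho> - complex_of_real \<gamma> \<cdot>\<^sub>m \<sigma>)))"

definition msqrt :: "nat \<Rightarrow> complex mat \<Rightarrow> complex mat" where
  "msqrt n P = (THE S. psd n S \<and> S * S = P)"

definition trace_norm :: "nat \<Rightarrow> complex mat \<Rightarrow> real" where
  "trace_norm n X = Re (mtrace (msqrt n (adj X * X)))"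

definition blk :: "nat \<Rightarrow> complex mat \<Rightarrow> nat \<Rightarrow> nat \<Rightarrow> complex mat" where
  "blk n X i j = mat n n (\<lambda>(a, b). X $$ (i * n + a, j * n + b))"

text \<open>The ampliation id_k \<otimes> A acting on (k*n) x (k*n) block matrices, output (k*m) x (k*m).\<close>
definition ampl :: "nat \<Rightarrow> nat \<Rightarrow> nat \<Rightarrow> (complex mat \<Rightarrow> complex mat) \<Rightarrow> complex mat \<Rightarrow> complex mat" where
  "ampl k n m A X = mat (k * m) (k * m)
     (\<lambda>(r, c). A (blk n X (r div m) (c div m)) $$ (r mod m, c mod m))"

definition channel :: "nat \<Rightarrow> nat \<Rightarrow> (complex mat \<Rightarrow> complex mat) \<Rightarrow> bool" where
  "channel n m A \<longleftrightarrow>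
     (\<forall>X \<in> carrier_mat n n. A X \<in> carrier_mat m m) \<and>
     (\<forall>X \<in> carrier_mat n n. \<forall>Y \<in> carrier_mat n n. A (X + Y) = A X + A Y) \<and>
     (\<forall>X \<in> carrier_mat n n. \<forall>c. A (c \<cdot>\<^sub>m X) = c \<cdot>\<^sub>m A X) \<and>
     (\<forall>X \<in> carrier_mat n n. mtrace (A X) = mtrace X) \<and>
     (\<forall>k X. psd (k * n) X \<longrightarrow> psd (k * m) (ampl k n m A X))"

definition LDP :: "nat \<Rightarrow> nat \<Rightarrow> real \<Rightarrow> (complex mat \<Rightarrow> complex mat) \<Rightarrow> bool" where
  "LDP n m \<epsilon> A \<longleftrightarrow> channel n m A \<and>
     (\<forall>\<rho> \<sigma>. density n \<rho> \<longrightarrow> density n \<sigma> \<longrightarrow> E_gamma m (exp \<epsilon>) (A \<rho>) (A \<sigma>) = 0)"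

text \<open>Trace-distance contraction coefficient (supremum in the extended reals; -\<infinity> if no two distinct states).\<close>
definition eta_tr :: "nat \<Rightarrow> nat \<Rightarrow> (complex mat \<Rightarrow> complex mat) \<Rightarrow> ereal" where
  "eta_tr n m A = (SUP p \<in> {(\<rho>, \<sigma>). density n \<rho> \<and> density n \<sigma> \<and> \<rho> \<noteq> \<sigma>}.
      ereal (trace_norm m (A (fst p) - A (snd p)) / trace_norm n (fst p - snd p)))"

end

(* Write rho - sigma = t (omega1 - omega2), where the density matrices omega1 and omega2 are the
   normalised positive and negative parts of rho - sigma, so that |rho - sigma|_1 = 2 t.
   In an orthonormal eigenbasis (v_l) of A omega1 - A omega2 the numbers a_l = <v_l, A omega1 v_l>
   and b_l = <v_l, A omega2 v_l> form two probability vectors with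
   |A omega1 - A omega2|_1 = sum_l |a_l - b_l|. The condition E_{e^eps}(A omega1 || A omega2) = 0
   says A omega1 <= e^eps A omega2, hence a_l <= e^eps b_l, and symmetrically b_l <= e^eps a_l.
   Two probability vectors whose ratios lie in [e^-eps, e^eps] have total variation at most
   2 (e^eps - 1) / (e^eps + 1). *)

theory Submission
  imports Defs "Jordan_Normal_Form.Spectral_Radius"
begin

section \<open>Matrix algebra over the complex numbers\<close>

lemma index_mult_mat_sum:
  assumes "A \<in> carrier_mat n k" "B \<in> carrier_mat k m" "i < n" "j < m"
  shows "(A * B) $$ (i, j) = (\<Sum>l<k. A $$ (i, l) * B $$ (l, j))"
  using assms by (simp add: scalar_prod_def atLeast0LessThan)

lemma index_mult_mat_vec_sum:
  assumes "A \<in> carrier_mat n k" "v \<in> carrier_vec k" "i < n"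
  shows "(A *\<^sub>v v) $ i = (\<Sum>l<k. A $$ (i, l) * v $ l)"
  using assms by (simp add: scalar_prod_def atLeast0LessThan)

lemma conjugate_scalar_prod_sum:
  assumes "v \<in> carrier_vec n" "w \<in> carrier_vec n"
  shows "conjugate v \<bullet> w = (\<Sum>l<n. cnj (v $ l) * w $ l)"
  using assms by (simp add: scalar_prod_def atLeast0LessThan)

lemma cscalar_prod_sum:
  assumes "v \<in> carrier_vec n" "w \<in> carrier_vec n"
  shows "v \<bullet>c w = (\<Sum>l<n. v $ l * cnj (w $ l))"
  using assms by (simp add: scalar_prod_def atLeast0LessThan)

lemma sum_rotate3:
  "(\<Sum>a<n. \<Sum>b<n. \<Sum>c<n. F a b c) = (\<Sum>b<n. \<Sum>c<n. \<Sum>a<(n::nat). (F a b c :: 'a::comm_monoid_add))"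
proof -
  have "(\<Sum>a<n. \<Sum>b<n. \<Sum>c<n. F a b c) = (\<Sum>b<n. \<Sum>a<n. \<Sum>c<n. F a b c)"
    by (rule sum.swap)
  also have "\<dots> = (\<Sum>b<n. \<Sum>c<n. \<Sum>a<n. F a b c)"
    by (rule sum.cong[OF refl], rule sum.swap)
  finally show ?thesis .
qed

lemma sum_reverse3:
  "(\<Sum>a<n. \<Sum>b<n. \<Sum>c<n. F a b c) = (\<Sum>c<n. \<Sum>b<n. \<Sum>a<(n::nat). (F a b c :: 'a::comm_monoid_add))"
proof -
  have "(\<Sum>a<n. \<Sum>b<n. \<Sum>c<n. F a b c) = (\<Sum>a<n. \<Sum>c<n. \<Sum>b<n. F a b c)"
    by (rule sum.cong[OF refl], rule sum.swap)
  also have "\<dots> = (\<Sum>c<n. \<Sum>b<n. \<Sum>a<n. F a b c)"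
    by (rule sum_rotate3)
  finally show ?thesis .
qed

lemma sum_mult_delta:
  assumes "l < n"
  shows "(\<Sum>k<(n::nat). f k * (if l = k then 1 else 0)) = (f l :: 'a::semiring_1)"
proof -
  have "(\<Sum>k<n. f k * (if l = k then 1 else 0)) = (\<Sum>k<n. if l = k then f k else 0)"
    by (rule sum.cong) auto
  then show ?thesis using assms by (simp add: sum.delta)
qed

lemma adj_carrier_mat [simp]: "A \<in> carrier_mat r c \<Longrightarrow> adj A \<in> carrier_mat c r"
  by (simp add: adj_def)

lemma dim_adj [simp]: "dim_row (adj A) = dim_col A" "dim_col (adj A) = dim_row A"
  by (simp_all add: adj_def)

lemma index_adj [simp]: "i < dim_col A \<Longrightarrow> j < dim_row A \<Longrightarrow> adj A $$ (i, j) = cnj (A $$ (j, i))"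
  by (simp add: adj_def)

lemma adj_adj [simp]: "adj (adj A) = A"
  by (rule eq_matI) auto

lemma adj_mult:
  assumes "A \<in> carrier_mat n k" "B \<in> carrier_mat k m"
  shows "adj (A * B) = adj B * adj A"
proof (rule eq_matI)
  fix i j assume "i < dim_row (adj B * adj A)" "j < dim_col (adj B * adj A)"
  then have i: "i < m" and j: "j < n" using assms by auto
  have "adj (A * B) $$ (i, j) = (\<Sum>l<k. cnj (A $$ (j, l)) * cnj (B $$ (l, i)))"
    using assms i j by (simp add: index_mult_mat_sum[OF assms j i] cnj_sum)
  also have "\<dots> = (adj B * adj A) $$ (i, j)"
    by (subst index_mult_mat_sum[of _ m k _ n]) (use assms i j in \<open>auto simp: mult.commute intro!: sum.cong\<close>)
  finally show "adj (A * B) $$ (i, j) = (adj B * adj A) $$ (i, j)" .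
qed (use assms in auto)

lemma adj_add: "A \<in> carrier_mat r c \<Longrightarrow> B \<in> carrier_mat r c \<Longrightarrow> adj (A + B) = adj A + adj B"
  by (rule eq_matI) auto

lemma adj_minus: "A \<in> carrier_mat r c \<Longrightarrow> B \<in> carrier_mat r c \<Longrightarrow> adj (A - B) = adj A - adj B"
  by (rule eq_matI) auto

lemma adj_zero_mat [simp]: "adj (0\<^sub>m r c) = 0\<^sub>m c r"
  by (rule eq_matI) auto

lemma adj_smult: "adj (a \<cdot>\<^sub>m A) = cnj a \<cdot>\<^sub>m adj A"
  by (rule eq_matI) auto

lemma hermitianD_index:
  assumes "hermitian A" "A \<in> carrier_mat n n" "i < n" "j < n"
  shows "A $$ (i, j) = cnj (A $$ (j, i))"
proof -
  have "A $$ (i, j) = adj A $$ (i, j)"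
    using assms(1) unfolding hermitian_def by (rule arg_cong)
  then show ?thesis using assms by simp
qed

lemma hermitianI_index:
  assumes "A \<in> carrier_mat n n" "\<And>i j. i < n \<Longrightarrow> j < n \<Longrightarrow> A $$ (i, j) = cnj (A $$ (j, i))"
  shows "hermitian A"
  unfolding hermitian_def
proof (rule eq_matI)
  fix i j assume "i < dim_row (adj A)" "j < dim_col (adj A)"
  then show "A $$ (i, j) = adj A $$ (i, j)"
    using assms(1) assms(2)[of i j] by simp
qed (use assms(1) in auto)

lemma hermitian_add:
  "A \<in> carrier_mat n n \<Longrightarrow> B \<in> carrier_mat n n \<Longrightarrow> hermitian A \<Longrightarrow> hermitian B \<Longrightarrow> hermitian (A + B)"
  unfolding hermitian_def by (metis adj_add)

lemma hermitian_minus: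
  "A \<in> carrier_mat n n \<Longrightarrow> B \<in> carrier_mat n n \<Longrightarrow> hermitian A \<Longrightarrow> hermitian B \<Longrightarrow> hermitian (A - B)"
  unfolding hermitian_def by (metis adj_minus)

lemma hermitian_smult_real: "hermitian A \<Longrightarrow> hermitian (complex_of_real c \<cdot>\<^sub>m A)"
  unfolding hermitian_def by (metis adj_smult complex_cnj_complex_of_real)

lemma mtrace_minus:
  "A \<in> carrier_mat n n \<Longrightarrow> B \<in> carrier_mat n n \<Longrightarrow> mtrace (A - B) = mtrace A - mtrace B"
  by (simp add: mtrace_def sum_subtractf)

definition qform :: "complex mat \<Rightarrow> complex vec \<Rightarrow> complex" where
  "qform A v = conjugate v \<bullet> (A *\<^sub>v v)"

lemma qform_sum:
  assumes "A \<in> carrier_mat n n" "v \<in> carrier_vec n"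
  shows "qform A v = (\<Sum>i<n. cnj (v $ i) * (\<Sum>j<n. A $$ (i, j) * v $ j))"
  unfolding qform_def conjugate_scalar_prod_sum[OF assms(2) mult_mat_vec_carrier[OF assms]]
proof (intro sum.cong refl)
  fix i assume "i \<in> {..<n}"
  then show "cnj (v $ i) * (A *\<^sub>v v) $ i = cnj (v $ i) * (\<Sum>j<n. A $$ (i, j) * v $ j)"
    by (subst index_mult_mat_vec_sum[OF assms]) auto
qed

lemma qform_add:
  assumes "A \<in> carrier_mat n n" "B \<in> carrier_mat n n" "v \<in> carrier_vec n"
  shows "qform (A + B) v = qform A v + qform B v"
  unfolding qform_def using assms
  by (simp add: add_mult_distrib_mat_vec[OF assms] scalar_prod_add_distrib[of _ n])

lemma qform_minus:
  assumes "A \<in> carrier_mat n n" "B \<in> carrier_mat n n" "v \<in> carrier_vec n"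
  shows "qform (A - B) v = qform A v - qform B v"
  unfolding qform_def using assms
  by (simp add: minus_mult_distrib_mat_vec[OF assms] scalar_prod_minus_distrib[of _ n])

lemma qform_smult:
  assumes "A \<in> carrier_mat n n" "v \<in> carrier_vec n"
  shows "qform (c \<cdot>\<^sub>m A) v = c * qform A v"
proof -
  have "(c \<cdot>\<^sub>m A) *\<^sub>v v = c \<cdot>\<^sub>v (A *\<^sub>v v)"
    using assms by (intro eq_vecI) (auto simp: scalar_prod_def sum_distrib_left mult.assoc)
  then show ?thesis
    unfolding qform_def using assms by simp
qed

lemma qform_adj:
  assumes A: "A \<in> carrier_mat n n" and v: "v \<in> carrier_vec n"
  shows "qform (adj A) v = cnj (qform A v)"
proof -
  have "qform (adj A) v = (\<Sum>i<n. cnj (v $ i) * (\<Sum>j<n. adj A $$ (i, j) * v $ j))"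
    by (rule qform_sum[OF adj_carrier_mat[OF A] v])
  also have "\<dots> = (\<Sum>i<n. \<Sum>j<n. cnj (v $ i) * cnj (A $$ (j, i)) * v $ j)"
    using A by (intro sum.cong refl) (simp add: sum_distrib_left algebra_simps)
  also have "\<dots> = (\<Sum>j<n. \<Sum>i<n. cnj (v $ i) * cnj (A $$ (j, i)) * v $ j)"
    by (rule sum.swap)
  also have "\<dots> = cnj (\<Sum>j<n. cnj (v $ j) * (\<Sum>i<n. A $$ (j, i) * v $ i))"
    by (simp add: cnj_sum sum_distrib_left algebra_simps)
  also have "\<dots> = cnj (qform A v)"
    using qform_sum[OF A v] by simp
  finally show ?thesis .
qed

lemma qform_hermitian_real:
  assumes "A \<in> carrier_mat n n" "hermitian A" "v \<in> carrier_vec n"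
  shows "qform A v = complex_of_real (Re (qform A v))"
proof -
  have "qform A v = cnj (qform A v)"
    using qform_adj[OF assms(1,3)] assms(2) unfolding hermitian_def by metis
  then have "Im (qform A v) = 0" by (metis cnj.simps(2) neg_equal_zero)
  then show ?thesis by (simp add: complex_eq_iff)
qed

lemma qform_mult_eigenvector:
  assumes "A \<in> carrier_mat n n" "H \<in> carrier_mat n n" "v \<in> carrier_vec n" "H *\<^sub>v v = c \<cdot>\<^sub>v v"
  shows "qform (A * H) v = c * qform A v"
proof -
  have "(A * H) *\<^sub>v v = c \<cdot>\<^sub>v (A *\<^sub>v v)"
    using assms by (simp add: mult_mat_vec)
  then show ?thesis unfolding qform_def using assms by simp
qed

definition unitary :: "nat \<Rightarrow> complex mat \<Rightarrow> bool" where
  "unitary n U \<longleftrightarrow> U \<in> carrier_mat n n \<and> adj U * U = 1\<^sub>m n \<and> U * adj U = 1\<^sub>m n"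

lemma unitary_carrier_mat: "unitary n U \<Longrightarrow> U \<in> carrier_mat n n"
  by (simp add: unitary_def)

lemma unitaryI: "U \<in> carrier_mat n n \<Longrightarrow> adj U * U = 1\<^sub>m n \<Longrightarrow> unitary n U"
  using mat_mult_left_right_inverse[of "adj U" n U] unfolding unitary_def by auto

lemma unitaryI_orthonormal_cols:
  assumes U: "U \<in> carrier_mat n n"
    and orth: "\<And>i j. i < n \<Longrightarrow> j < n \<Longrightarrow> (\<Sum>k<n. cnj (U $$ (k, i)) * U $$ (k, j)) = (if i = j then 1 else 0)"
  shows "unitary n U"
proof (rule unitaryI[OF U], rule eq_matI)
  fix i j assume "i < dim_row (1\<^sub>m n)" "j < dim_col (1\<^sub>m n)"
  then show "(adj U * U) $$ (i, j) = 1\<^sub>m n $$ (i, j)"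
    using U orth by (subst index_mult_mat_sum[of _ n n _ n]) auto
qed (use U in auto)

lemma unitary_orthonormal_cols:
  assumes "unitary n U" "i < n" "j < n"
  shows "(\<Sum>k<n. cnj (U $$ (k, i)) * U $$ (k, j)) = (if i = j then 1 else 0)"
proof -
  have "(adj U * U) $$ (i, j) = (\<Sum>k<n. cnj (U $$ (k, i)) * U $$ (k, j))"
    using assms by (subst index_mult_mat_sum[of _ n n _ n]) (auto simp: unitary_def)
  then show ?thesis using assms by (simp add: unitary_def)
qed

lemma unitary_orthonormal_rows:
  assumes "unitary n U" "i < n" "j < n"
  shows "(\<Sum>k<n. U $$ (i, k) * cnj (U $$ (j, k))) = (if i = j then 1 else 0)"
proof -
  have "(U * adj U) $$ (i, j) = (\<Sum>k<n. U $$ (i, k) * cnj (U $$ (j, k)))"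
    using assms by (subst index_mult_mat_sum[of _ n n _ n]) (auto simp: unitary_def)
  then show ?thesis using assms by (simp add: unitary_def)
qed

lemma unitary_mult:
  assumes U: "unitary n U" and V: "unitary n V"
  shows "unitary n (U * V)"
proof -
  have Uc: "U \<in> carrier_mat n n" and Vc: "V \<in> carrier_mat n n"
    using U V by (simp_all add: unitary_carrier_mat)
  have aU: "adj U \<in> carrier_mat n n" and aV: "adj V \<in> carrier_mat n n"
    using Uc Vc by simp_all
  have "adj (U * V) * (U * V) = adj V * (adj U * (U * V))"
    using assoc_mult_mat[OF aV aU mult_carrier_mat[OF Uc Vc]] adj_mult[OF Uc Vc] by simp
  also have "adj U * (U * V) = (adj U * U) * V"
    by (rule assoc_mult_mat[symmetric, OF aU Uc Vc])
  also have "\<dots> = V"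
    using U Vc by (simp add: unitary_def)
  also have "adj V * V = 1\<^sub>m n"
    using V by (simp add: unitary_def)
  finally show ?thesis using Uc Vc by (intro unitaryI) auto
qed

section \<open>Matrices given by an orthonormal eigenbasis\<close>

text \<open>\<open>spectral_mat n U d\<close> is \<open>U diag(d) U\<^sup>*\<close>, written out entrywise.\<close>

definition spectral_mat :: "nat \<Rightarrow> complex mat \<Rightarrow> (nat \<Rightarrow> real) \<Rightarrow> complex mat" where
  "spectral_mat n U d = mat n n (\<lambda>(i, j). \<Sum>l<n. U $$ (i, l) * complex_of_real (d l) * cnj (U $$ (j, l)))"

lemma spectral_mat_carrier [simp]: "spectral_mat n U d \<in> carrier_mat n n"
  by (simp add: spectral_mat_def)

lemma dim_spectral_mat [simp]: "dim_row (spectral_mat n U d) = n" "dim_col (spectral_mat n U d) = n"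
  by (simp_all add: spectral_mat_def)

lemma index_spectral_mat:
  "i < n \<Longrightarrow> j < n \<Longrightarrow>
    spectral_mat n U d $$ (i, j) = (\<Sum>l<n. U $$ (i, l) * complex_of_real (d l) * cnj (U $$ (j, l)))"
  by (simp add: spectral_mat_def)

lemma spectral_mat_cong: "(\<And>l. l < n \<Longrightarrow> a l = b l) \<Longrightarrow> spectral_mat n U a = spectral_mat n U b"
  unfolding spectral_mat_def by (intro eq_matI) (auto intro!: sum.cong)

lemma spectral_mat_hermitian: "hermitian (spectral_mat n U d)"
proof (rule hermitianI_index[of _ n])
  fix i j assume "i < n" "j < n"
  then show "spectral_mat n U d $$ (i, j) = cnj (spectral_mat n U d $$ (j, i))"
    by (simp add: index_spectral_mat cnj_sum mult.commute mult.left_commute)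
qed simp

lemma spectral_mat_add: "spectral_mat n U a + spectral_mat n U b = spectral_mat n U (\<lambda>l. a l + b l)"
  by (rule eq_matI) (simp_all add: index_spectral_mat ring_distribs sum.distrib)

lemma spectral_mat_minus: "spectral_mat n U a - spectral_mat n U b = spectral_mat n U (\<lambda>l. a l - b l)"
  by (rule eq_matI) (simp_all add: index_spectral_mat ring_distribs sum_subtractf)

lemma spectral_mat_smult: "complex_of_real c \<cdot>\<^sub>m spectral_mat n U a = spectral_mat n U (\<lambda>l. c * a l)"
  by (rule eq_matI) (simp_all add: index_spectral_mat sum_distrib_left mult_ac)

lemma spectral_mat_zero: "spectral_mat n U (\<lambda>l. 0) = 0\<^sub>m n n"
  by (rule eq_matI) (simp_all add: index_spectral_mat)

lemma spectral_mat_mult: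
  assumes U: "unitary n U"
  shows "spectral_mat n U a * spectral_mat n U b = spectral_mat n U (\<lambda>l. a l * b l)"
proof (rule eq_matI)
  fix i j assume "i < dim_row (spectral_mat n U (\<lambda>l. a l * b l))" "j < dim_col (spectral_mat n U (\<lambda>l. a l * b l))"
  then have ij: "i < n" "j < n" by auto
  let ?a = "\<lambda>l. complex_of_real (a l)" and ?b = "\<lambda>l. complex_of_real (b l)"
  have "(spectral_mat n U a * spectral_mat n U b) $$ (i, j) =
      (\<Sum>k<n. (\<Sum>l<n. U $$ (i, l) * ?a l * cnj (U $$ (k, l))) * (\<Sum>m<n. U $$ (k, m) * ?b m * cnj (U $$ (j, m))))"
    using ij by (subst index_mult_mat_sum[OF spectral_mat_carrier spectral_mat_carrier ij])
      (intro sum.cong refl, simp add: index_spectral_mat)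
  also have "\<dots> = (\<Sum>k<n. \<Sum>l<n. \<Sum>m<n. (U $$ (i, l) * ?a l * cnj (U $$ (k, l))) * (U $$ (k, m) * ?b m * cnj (U $$ (j, m))))"
    by (simp only: sum_product)
  also have "\<dots> = (\<Sum>l<n. \<Sum>m<n. \<Sum>k<n. (U $$ (i, l) * ?a l * cnj (U $$ (k, l))) * (U $$ (k, m) * ?b m * cnj (U $$ (j, m))))"
    by (rule sum_rotate3)
  also have "\<dots> = (\<Sum>l<n. \<Sum>m<n. (U $$ (i, l) * ?a l * ?b m * cnj (U $$ (j, m))) * (\<Sum>k<n. cnj (U $$ (k, l)) * U $$ (k, m)))"
    by (intro sum.cong refl) (simp add: sum_distrib_left algebra_simps)
  also have "\<dots> = (\<Sum>l<n. U $$ (i, l) * ?a l * ?b l * cnj (U $$ (j, l)))"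
    by (intro sum.cong refl) (simp add: unitary_orthonormal_cols[OF U] sum_mult_delta)
  also have "\<dots> = spectral_mat n U (\<lambda>l. a l * b l) $$ (i, j)"
    using ij by (simp add: index_spectral_mat algebra_simps)
  finally show "(spectral_mat n U a * spectral_mat n U b) $$ (i, j) = spectral_mat n U (\<lambda>l. a l * b l) $$ (i, j)" .
qed simp_all

lemma spectral_mat_conj:
  assumes W: "W \<in> carrier_mat n n" and U: "U \<in> carrier_mat n n"
  shows "W * spectral_mat n U d * adj W = spectral_mat n (W * U) d"
proof (rule eq_matI)
  fix i j assume "i < dim_row (spectral_mat n (W * U) d)" "j < dim_col (spectral_mat n (W * U) d)"
  then have ij: "i < n" "j < n" by auto
  let ?d = "\<lambda>l. complex_of_real (d l)"
  have WS: "W * spectral_mat n U d \<in> carrier_mat n n" using W by simp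
  have WSi: "(W * spectral_mat n U d) $$ (i, b) = (\<Sum>a<n. W $$ (i, a) * (\<Sum>l<n. U $$ (a, l) * ?d l * cnj (U $$ (b, l))))"
    if "b < n" for b
    by (subst index_mult_mat_sum[OF W spectral_mat_carrier ij(1) that])
      (intro sum.cong refl, simp add: index_spectral_mat that)
  have "(W * spectral_mat n U d * adj W) $$ (i, j) =
      (\<Sum>b<n. (\<Sum>a<n. W $$ (i, a) * (\<Sum>l<n. U $$ (a, l) * ?d l * cnj (U $$ (b, l)))) * cnj (W $$ (j, b)))"
    using W by (subst index_mult_mat_sum[OF WS adj_carrier_mat[OF W] ij])
      (intro sum.cong refl, simp add: WSi ij carrier_matD[OF W] del: index_mult_mat)
  also have "\<dots> = (\<Sum>b<n. \<Sum>a<n. \<Sum>l<n. W $$ (i, a) * U $$ (a, l) * ?d l * cnj (U $$ (b, l)) * cnj (W $$ (j, b)))"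
    by (simp add: sum_distrib_left sum_distrib_right algebra_simps)
  also have "\<dots> = (\<Sum>l<n. \<Sum>a<n. \<Sum>b<n. W $$ (i, a) * U $$ (a, l) * ?d l * cnj (U $$ (b, l)) * cnj (W $$ (j, b)))"
    by (rule sum_reverse3)
  also have "\<dots> = (\<Sum>l<n. (\<Sum>a<n. W $$ (i, a) * U $$ (a, l)) * ?d l * cnj (\<Sum>b<n. W $$ (j, b) * U $$ (b, l)))"
    by (simp add: sum_distrib_left sum_distrib_right cnj_sum algebra_simps)
  also have "\<dots> = spectral_mat n (W * U) d $$ (i, j)"
    using ij by (simp add: index_spectral_mat index_mult_mat_sum[OF W U])
  finally show "(W * spectral_mat n U d * adj W) $$ (i, j) = spectral_mat n (W * U) d $$ (i, j)" .
qed (use W in simp_all)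

lemma mtrace_spectral_mat:
  assumes U: "unitary n U"
  shows "mtrace (spectral_mat n U d) = complex_of_real (\<Sum>l<n. d l)"
proof -
  have "mtrace (spectral_mat n U d) = (\<Sum>i<n. \<Sum>l<n. U $$ (i, l) * complex_of_real (d l) * cnj (U $$ (i, l)))"
    by (simp add: mtrace_def index_spectral_mat)
  also have "\<dots> = (\<Sum>l<n. complex_of_real (d l) * (\<Sum>i<n. cnj (U $$ (i, l)) * U $$ (i, l)))"
    by (subst sum.swap) (simp add: sum_distrib_left algebra_simps)
  also have "\<dots> = complex_of_real (\<Sum>l<n. d l)"
    by (simp add: unitary_orthonormal_cols[OF U])
  finally show ?thesis .
qed

lemma spectral_mat_mult_col:
  assumes U: "unitary n U" and k: "k < n"
  shows "spectral_mat n U d *\<^sub>v col U k = complex_of_real (d k) \<cdot>\<^sub>v col U k"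
proof -
  have Uc: "U \<in> carrier_mat n n" using U by (rule unitary_carrier_mat)
  show ?thesis
  proof (rule eq_vecI)
    fix i assume "i < dim_vec (complex_of_real (d k) \<cdot>\<^sub>v col U k)"
    then have i: "i < n" using Uc by simp
    have "(spectral_mat n U d *\<^sub>v col U k) $ i =
        (\<Sum>j<n. \<Sum>l<n. U $$ (i, l) * complex_of_real (d l) * cnj (U $$ (j, l)) * U $$ (j, k))"
      by (subst index_mult_mat_vec_sum[OF spectral_mat_carrier col_carrier_vec[OF k Uc] i])
        (intro sum.cong refl, simp add: index_spectral_mat i k carrier_matD[OF Uc] sum_distrib_right)
    also have "\<dots> = (\<Sum>l<n. (U $$ (i, l) * complex_of_real (d l)) * (\<Sum>j<n. cnj (U $$ (j, l)) * U $$ (j, k)))"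
      by (subst sum.swap) (simp add: sum_distrib_left algebra_simps)
    also have "\<dots> = U $$ (i, k) * complex_of_real (d k)"
      using k by (simp add: unitary_orthonormal_cols[OF U] if_distrib[of "(*) _"] sum.delta' cong: if_cong)
    finally show "(spectral_mat n U d *\<^sub>v col U k) $ i = (complex_of_real (d k) \<cdot>\<^sub>v col U k) $ i"
      using i k Uc by simp
  qed (use Uc in simp)
qed

lemma qform_spectral_mat:
  assumes U: "U \<in> carrier_mat n n" and v: "v \<in> carrier_vec n"
  shows "Re (qform (spectral_mat n U d) v) = (\<Sum>l<n. d l * (cmod (\<Sum>j<n. cnj (U $$ (j, l)) * v $ j))\<^sup>2)"
proof -
  let ?c = "\<lambda>l. \<Sum>j<n. cnj (U $$ (j, l)) * v $ j"
  have "qform (spectral_mat n U d) v =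
      (\<Sum>i<n. \<Sum>j<n. \<Sum>l<n. cnj (v $ i) * U $$ (i, l) * complex_of_real (d l) * cnj (U $$ (j, l)) * v $ j)"
    using v by (simp add: qform_sum[OF spectral_mat_carrier v] index_spectral_mat sum_distrib_left
        sum_distrib_right algebra_simps)
  also have "\<dots> = (\<Sum>l<n. \<Sum>i<n. \<Sum>j<n. cnj (v $ i) * U $$ (i, l) * complex_of_real (d l) * cnj (U $$ (j, l)) * v $ j)"
    by (rule sum_rotate3[symmetric])
  also have "\<dots> = (\<Sum>l<n. complex_of_real (d l) * (cnj (?c l) * ?c l))"
    by (simp add: cnj_sum sum_product sum_distrib_left algebra_simps)
  also have "\<dots> = (\<Sum>l<n. complex_of_real (d l * (cmod (?c l))\<^sup>2))"
    by (simp only: of_real_mult complex_norm_square mult.commute[of "cnj _"])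
  finally show ?thesis by (simp only: Re_sum Re_complex_of_real)
qed

lemma qform_spectral_mat_col:
  assumes U: "unitary n U" and k: "k < n"
  shows "qform (spectral_mat n U d) (col U k) = complex_of_real (d k)"
proof -
  have Uc: "U \<in> carrier_mat n n" using U by (rule unitary_carrier_mat)
  have "conjugate (col U k) \<bullet> col U k = 1"
    using Uc k by (simp add: conjugate_scalar_prod_sum[of _ n] unitary_orthonormal_cols[OF U k k])
  then show ?thesis
    unfolding qform_def spectral_mat_mult_col[OF U k] using Uc k by simp
qed

section \<open>The spectral theorem for Hermitian matrices\<close>

lemma unitary_normalized_orthogonal_cols:
  assumes ws: "set ws \<subseteq> carrier_vec n" "corthogonal ws" "length ws = n"
  defines "W \<equiv> mat n n (\<lambda>(i, j). complex_of_real (1 / sqrt (Re (ws ! j \<bullet>c ws ! j))) * ws ! j $ i)"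
  shows "unitary n W"
proof (rule unitaryI_orthonormal_cols)
  show Wc: "W \<in> carrier_mat n n" by (simp add: W_def)
  fix a b assume a: "a < n" and b: "b < n"
  define s where "s j = 1 / sqrt (Re (ws ! j \<bullet>c ws ! j))" for j
  have wsc: "ws ! j \<in> carrier_vec n" if "j < n" for j
    using ws that by auto
  have "(\<Sum>k<n. cnj (W $$ (k, a)) * W $$ (k, b)) =
      (\<Sum>k<n. complex_of_real (s a * s b) * (ws ! b $ k * cnj (ws ! a $ k)))"
    using a b by (intro sum.cong refl) (simp add: W_def s_def)
  also have "\<dots> = complex_of_real (s a * s b) * (ws ! b \<bullet>c ws ! a)"
    by (simp add: cscalar_prod_sum[OF wsc[OF b] wsc[OF a]] sum_distrib_left)
  also have "\<dots> = (if a = b then 1 else 0)"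
  proof (cases "a = b")
    case True
    have "ws ! a \<bullet>c ws ! a \<noteq> 0" "ws ! a \<bullet>c ws ! a \<ge> 0"
      using corthogonalD[OF ws(2), of a a] a ws(3) by auto
    then have "Im (ws ! a \<bullet>c ws ! a) = 0" "Re (ws ! a \<bullet>c ws ! a) > 0"
      by (auto simp: less_eq_complex_def complex_eq_iff)
    then show ?thesis
      using True by (simp add: s_def complex_eq_iff)
  next
    case False
    then show ?thesis
      using corthogonalD[OF ws(2), of b a] a b ws(3) by simp
  qed
  finally show "(\<Sum>k<n. cnj (W $$ (k, a)) * W $$ (k, b)) = (if a = b then 1 else 0)" .
qed

lemma unitary_with_first_col:
  assumes v: "v \<in> carrier_vec n" and v0: "v \<noteq> 0\<^sub>v n"
  obtains W c where "unitary n W" "col W 0 = c \<cdot>\<^sub>v v"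
proof -
  interpret cof_vec_space n "TYPE(complex)" .
  have n0: "0 < n"
    using v v0 by (metis carrier_vecD gr0I vec_of_dim_0)
  define b where "b = basis_completion v"
  note bc = basis_completion[OF v v0, folded b_def]
  obtain vs where bv: "b = v # vs"
    unfolding b_def basis_completion_def Let_def by auto
  define ws where "ws = gram_schmidt n b"
  note gs = gram_schmidt_result[OF bc(2) bc(4) bc(5) ws_def]
  have len: "length ws = n"
    using gs(4) bc(6) by simp
  have hd: "ws ! 0 = v"
    using gram_schmidt_hd[OF v, of vs] bv ws_def len n0 by (metis hd_conv_nth list.size(3) not_less_zero)
  define W where "W = mat n n (\<lambda>(i, j). complex_of_real (1 / sqrt (Re (ws ! j \<bullet>c ws ! j))) * ws ! j $ i)"
  have "unitary n W"
    unfolding W_def by (rule unitary_normalized_orthogonal_cols[OF gs(3,2) len])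
  moreover have "col W 0 = complex_of_real (1 / sqrt (Re (v \<bullet>c v))) \<cdot>\<^sub>v v"
    using n0 v hd by (intro eq_vecI) (auto simp: W_def)
  ultimately show ?thesis by (rule that)
qed

definition block_one :: "nat \<Rightarrow> complex mat \<Rightarrow> complex mat" where
  "block_one k U = mat (Suc k) (Suc k)
     (\<lambda>(i, j). if i = 0 \<or> j = 0 then (if i = j then 1 else 0) else U $$ (i - 1, j - 1))"

lemma block_one_carrier [simp]: "block_one k U \<in> carrier_mat (Suc k) (Suc k)"
  by (simp add: block_one_def)

lemma unitary_block_one:
  assumes U: "unitary k U"
  shows "unitary (Suc k) (block_one k U)"
proof (rule unitaryI_orthonormal_cols[OF block_one_carrier])
  fix i j assume ij: "i < Suc k" "j < Suc k"
  let ?V = "block_one k U"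
  have "(\<Sum>l<Suc k. cnj (?V $$ (l, i)) * ?V $$ (l, j)) =
      cnj (?V $$ (0, i)) * ?V $$ (0, j) + (\<Sum>l<k. cnj (?V $$ (Suc l, i)) * ?V $$ (Suc l, j))"
    by (rule sum.lessThan_Suc_shift)
  also have "\<dots> = (if i = j then 1 else 0)"
  proof (cases "i = 0 \<or> j = 0")
    case True
    then show ?thesis using ij by (auto simp: block_one_def)
  next
    case False
    then obtain i' j' where i': "i = Suc i'" and j': "j = Suc j'"
      by (metis not0_implies_Suc)
    have "(\<Sum>l<k. cnj (?V $$ (Suc l, i)) * ?V $$ (Suc l, j)) = (\<Sum>l<k. cnj (U $$ (l, i')) * U $$ (l, j'))"
      using ij i' j' by (intro sum.cong refl) (simp add: block_one_def)
    then show ?thesis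
      using ij i' j' by (simp add: block_one_def unitary_orthonormal_cols[OF U])
  qed
  finally show "(\<Sum>l<Suc k. cnj (?V $$ (l, i)) * ?V $$ (l, j)) = (if i = j then 1 else 0)" .
qed

lemma spectral_mat_block_one:
  assumes A: "A \<in> carrier_mat (Suc k) (Suc k)"
    and col0: "\<And>i. i < Suc k \<Longrightarrow> A $$ (i, 0) = (if i = 0 then complex_of_real e else 0)"
    and row0: "\<And>j. j < Suc k \<Longrightarrow> A $$ (0, j) = (if j = 0 then complex_of_real e else 0)"
    and block: "\<And>i j. i < k \<Longrightarrow> j < k \<Longrightarrow> A $$ (Suc i, Suc j) = spectral_mat k U d $$ (i, j)"
  shows "A = spectral_mat (Suc k) (block_one k U) (\<lambda>l. if l = 0 then e else d (l - 1))"
    (is "A = spectral_mat _ ?V ?d")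
proof (rule eq_matI)
  fix i j assume "i < dim_row (spectral_mat (Suc k) ?V ?d)" "j < dim_col (spectral_mat (Suc k) ?V ?d)"
  then have ij: "i < Suc k" "j < Suc k" by auto
  have "spectral_mat (Suc k) ?V ?d $$ (i, j) =
      ?V $$ (i, 0) * complex_of_real (?d 0) * cnj (?V $$ (j, 0)) +
      (\<Sum>l<k. ?V $$ (i, Suc l) * complex_of_real (?d (Suc l)) * cnj (?V $$ (j, Suc l)))"
    using ij by (simp add: index_spectral_mat sum.lessThan_Suc_shift del: sum.lessThan_Suc)
  also have "\<dots> = A $$ (i, j)"
  proof (cases "i = 0 \<or> j = 0")
    case True
    then show ?thesis using ij col0 row0 by (auto simp: block_one_def)
  next
    case False
    then obtain i' j' where i': "i = Suc i'" and j': "j = Suc j'"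
      by (metis not0_implies_Suc)
    have "(\<Sum>l<k. ?V $$ (i, Suc l) * complex_of_real (?d (Suc l)) * cnj (?V $$ (j, Suc l))) =
        spectral_mat k U d $$ (i', j')"
      using ij i' j' by (simp add: block_one_def index_spectral_mat)
    then show ?thesis
      using ij i' j' block by (simp add: block_one_def)
  qed
  finally show "A $$ (i, j) = spectral_mat (Suc k) ?V ?d $$ (i, j)" ..
qed (use A in auto)

lemma unitary_conj_first_col_eigenvector:
  assumes A: "A \<in> carrier_mat n n" and W: "unitary n W" and W0: "col W 0 = c \<cdot>\<^sub>v v"
    and v: "v \<in> carrier_vec n" and ev: "A *\<^sub>v v = e \<cdot>\<^sub>v v" and i: "i < n"
  shows "(adj W * A * W) $$ (i, 0) = (if i = 0 then e else 0)"
proof -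
  have Wc: "W \<in> carrier_mat n n" using W by (rule unitary_carrier_mat)
  have n0: "0 < n" using i by simp
  have AW0: "(A * W) $$ (a, 0) = e * W $$ (a, 0)" if a: "a < n" for a
  proof -
    have "(A * W) $$ (a, 0) = (A *\<^sub>v col W 0) $ a"
      using a n0 A Wc by simp
    also have "A *\<^sub>v col W 0 = c \<cdot>\<^sub>v (e \<cdot>\<^sub>v v)"
      unfolding W0 mult_mat_vec[OF A v] ev ..
    also have "(c \<cdot>\<^sub>v (e \<cdot>\<^sub>v v)) $ a = e * (col W 0 $ a)"
      unfolding W0 using a v by simp
    also have "\<dots> = e * W $$ (a, 0)"
      using a n0 Wc by simp
    finally show ?thesis .
  qed
  have "adj W * A * W = adj W * (A * W)"
    by (rule assoc_mult_mat[OF adj_carrier_mat[OF Wc] A Wc])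
  then have "(adj W * A * W) $$ (i, 0) = (\<Sum>a<n. adj W $$ (i, a) * (A * W) $$ (a, 0))"
    using index_mult_mat_sum[OF adj_carrier_mat[OF Wc] mult_carrier_mat[OF A Wc] i n0] by simp
  also have "\<dots> = (\<Sum>a<n. cnj (W $$ (a, i)) * (e * W $$ (a, 0)))"
    using i Wc by (intro sum.cong refl) (simp add: AW0)
  also have "\<dots> = e * (\<Sum>a<n. cnj (W $$ (a, i)) * W $$ (a, 0))"
    by (simp add: sum_distrib_left algebra_simps)
  finally show ?thesis using unitary_orthonormal_cols[OF W i n0] by simp
qed

lemma hermitian_first_col_imp_first_row:
  assumes A: "A \<in> carrier_mat n n" "hermitian A" and n: "0 < n"
    and col0: "\<And>i. i < n \<Longrightarrow> A $$ (i, 0) = (if i = 0 then e else 0)"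
  shows "e = complex_of_real (Re e)" "\<And>j. j < n \<Longrightarrow> A $$ (0, j) = (if j = 0 then e else 0)"
proof -
  have "e = cnj e"
    using hermitianD_index[OF A(2,1) n n] col0[OF n] by simp
  then have "Im e = 0" by (metis cnj.simps(2) neg_equal_zero)
  then show e_real: "e = complex_of_real (Re e)" by (simp add: complex_eq_iff)
  fix j assume "j < n"
  then show "A $$ (0, j) = (if j = 0 then e else 0)"
    using hermitianD_index[OF A(2,1) n] col0 e_real
    by (metis complex_cnj_complex_of_real complex_cnj_zero)
qed

lemma hermitian_unitary_conj:
  assumes "A \<in> carrier_mat n n" "hermitian A" "W \<in> carrier_mat n n"
  shows "hermitian (adj W * A * W)"
proof -
  have "adj (adj W * A * W) = adj W * adj A * W"
    using assms by (simp add: adj_mult[of _ n n _ n] assoc_mult_mat[of _ n n _ n _ n])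
  then show ?thesis using assms(2) unfolding hermitian_def by metis
qed

lemma unitary_conj_cancel:
  assumes W: "unitary n W" and A: "A \<in> carrier_mat n n"
  shows "W * (adj W * A * W) * adj W = A"
proof -
  have Wc: "W \<in> carrier_mat n n" using W by (rule unitary_carrier_mat)
  have aW: "adj W \<in> carrier_mat n n" using Wc by simp
  have aWA: "adj W * A \<in> carrier_mat n n" using aW A by (rule mult_carrier_mat)
  have "W * (adj W * A * W) * adj W = (W * (adj W * A)) * (W * adj W)"
    by (simp add: assoc_mult_mat[OF Wc aWA Wc, symmetric] assoc_mult_mat[OF mult_carrier_mat[OF Wc aWA] Wc aW])
  also have "\<dots> = A"
    using W A aW by (simp add: unitary_def assoc_mult_mat[OF Wc aW A, symmetric])
  finally show ?thesis .
qed

text \<open>The \<open>schur_decomposition\<close> of Jordan_Normal_Form conjugates by matrices with orthogonal,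
  not orthonormal, columns, so we deflate along normalised eigenvectors directly.\<close>

theorem hermitian_spectral_decomposition:
  assumes "A \<in> carrier_mat n n" "hermitian A"
  obtains U d where "unitary n U" "A = spectral_mat n U d"
  using assms
proof (induction n arbitrary: A thesis)
  case 0
  have "unitary 0 (1\<^sub>m 0)" by (rule unitaryI) auto
  moreover have "A = spectral_mat 0 (1\<^sub>m 0) (\<lambda>_. 0)" using 0 by (intro eq_matI) auto
  ultimately show ?case by (rule 0)
next
  case (Suc k)
  have A: "A \<in> carrier_mat (Suc k) (Suc k)" and hA: "hermitian A" using Suc by auto
  obtain e where "eigenvalue A e"
    using spectrum_non_empty[OF A] unfolding spectrum_def by auto
  then obtain v where v: "v \<in> carrier_vec (Suc k)" "v \<noteq> 0\<^sub>v (Suc k)" and ev: "A *\<^sub>v v = e \<cdot>\<^sub>v v"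
    unfolding eigenvalue_def eigenvector_def using A by auto
  obtain W c where W: "unitary (Suc k) W" and W0: "col W 0 = c \<cdot>\<^sub>v v"
    using unitary_with_first_col[OF v] .
  have Wc: "W \<in> carrier_mat (Suc k) (Suc k)" using W by (rule unitary_carrier_mat)
  define A' where "A' = adj W * A * W"
  have A'c: "A' \<in> carrier_mat (Suc k) (Suc k)" and hA': "hermitian A'"
    using A hA Wc hermitian_unitary_conj[OF A hA Wc] by (auto simp: A'_def)
  have col0: "A' $$ (i, 0) = (if i = 0 then e else 0)" if "i < Suc k" for i
    unfolding A'_def by (rule unitary_conj_first_col_eigenvector[OF A W W0 v(1) ev that])
  note e_real = hermitian_first_col_imp_first_row(1)[OF A'c hA' zero_less_Suc col0]
    and row0 = hermitian_first_col_imp_first_row(2)[OF A'c hA' zero_less_Suc col0]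
  define A3 where "A3 = mat k k (\<lambda>(i, j). A' $$ (Suc i, Suc j))"
  have A3c: "A3 \<in> carrier_mat k k" by (simp add: A3_def)
  have "hermitian A3"
  proof (rule hermitianI_index[OF A3c])
    fix i j assume "i < k" "j < k"
    then show "A3 $$ (i, j) = cnj (A3 $$ (j, i))"
      using hermitianD_index[OF hA' A'c, of "Suc i" "Suc j"] by (simp add: A3_def)
  qed
  then obtain U3 d3 where U3: "unitary k U3" and A3sp: "A3 = spectral_mat k U3 d3"
    using Suc.IH[OF _ A3c] by blast
  have "A' = spectral_mat (Suc k) (block_one k U3) (\<lambda>l. if l = 0 then Re e else d3 (l - 1))"
    by (rule spectral_mat_block_one[OF A'c]) (use col0 row0 e_real A3sp[symmetric] in \<open>auto simp: A3_def\<close>)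
  then have "A = spectral_mat (Suc k) (W * block_one k U3) (\<lambda>l. if l = 0 then Re e else d3 (l - 1))"
    using unitary_conj_cancel[OF W A] spectral_mat_conj[OF Wc block_one_carrier] by (simp add: A'_def)
  then show ?case
    by (rule Suc.prems(1)[OF unitary_mult[OF W unitary_block_one[OF U3]]])
qed

section \<open>Positive semidefinite matrices and functional calculus\<close>

lemma psdD:
  assumes "psd n A"
  shows "A \<in> carrier_mat n n" "hermitian A" "\<And>v. v \<in> carrier_vec n \<Longrightarrow> 0 \<le> Re (qform A v)"
  using assms unfolding psd_def qform_def by auto

lemma psdI:
  assumes "A \<in> carrier_mat n n" "hermitian A" "\<And>v. v \<in> carrier_vec n \<Longrightarrow> 0 \<le> Re (qform A v)"
  shows "psd n A"
  using assms unfolding psd_def qform_def by auto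

lemma psd_spectral_mat:
  assumes U: "unitary n U" and d: "\<And>l. l < n \<Longrightarrow> 0 \<le> d l"
  shows "psd n (spectral_mat n U d)"
proof (rule psdI[OF spectral_mat_carrier spectral_mat_hermitian])
  fix v :: "complex vec" assume v: "v \<in> carrier_vec n"
  show "0 \<le> Re (qform (spectral_mat n U d) v)"
    unfolding qform_spectral_mat[OF unitary_carrier_mat[OF U] v]
    using d by (intro sum_nonneg mult_nonneg_nonneg) auto
qed

lemma psd_add:
  assumes A: "psd n A" and B: "psd n B"
  shows "psd n (A + B)"
proof (rule psdI)
  have Ac: "A \<in> carrier_mat n n" and Bc: "B \<in> carrier_mat n n"
    using A B by (simp_all add: psdD)
  then show "A + B \<in> carrier_mat n n" by simp
  show "hermitian (A + B)"
    by (rule hermitian_add[OF Ac Bc psdD(2)[OF A] psdD(2)[OF B]])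
  fix v :: "complex vec" assume "v \<in> carrier_vec n"
  then show "0 \<le> Re (qform (A + B) v)"
    using Ac Bc psdD(3)[OF A] psdD(3)[OF B] by (simp add: qform_add)
qed

text \<open>The key identity is \<open>S (S - T) + (S - T) T = S\<^sup>2 - T\<^sup>2\<close>.\<close>

lemma eigenvalue_mult_qform_eq_0_of_equal_squares:
  assumes S: "psd n S" and T: "psd n T" and ST: "S * S = T * T"
    and v: "v \<in> carrier_vec n" and ev: "(S - T) *\<^sub>v v = complex_of_real lam \<cdot>\<^sub>v v"
  shows "lam * (Re (qform S v) + Re (qform T v)) = 0"
proof -
  have Sc: "S \<in> carrier_mat n n" and Tc: "T \<in> carrier_mat n n"
    using S T by (simp_all add: psdD)
  define H where "H = S - T"
  have Hc: "H \<in> carrier_mat n n" unfolding H_def using Tc by (rule minus_carrier_mat)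
  have "adj (T * H) = H * T"
    using adj_mult[OF Tc Hc] psdD(2)[OF T] hermitian_minus[OF Sc Tc psdD(2)[OF S] psdD(2)[OF T]]
    unfolding hermitian_def H_def by metis
  then have HT: "qform (H * T) v = complex_of_real lam * cnj (qform T v)"
    using qform_adj[OF mult_carrier_mat[OF Tc Hc] v] qform_mult_eigenvector[OF Tc Hc v ev[folded H_def]]
    by simp
  have SH: "qform (S * H) v = complex_of_real lam * qform S v"
    by (rule qform_mult_eigenvector[OF Sc Hc v ev[folded H_def]])
  have "S * H + H * T = S * S - T * T"
    using Sc Tc by (simp add: H_def mult_minus_distrib_mat minus_mult_distrib_mat) (rule eq_matI, auto)
  also have "\<dots> = 0\<^sub>m n n"
    using ST Tc by (simp add: minus_r_inv_mat)
  finally have "S * H + H * T = 0\<^sub>m n n" .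
  moreover have "0\<^sub>m n n *\<^sub>v v = 0\<^sub>v n"
    using v by (intro eq_vecI) (auto simp: scalar_prod_def)
  ultimately have "qform (S * H) v + qform (H * T) v = 0"
    using qform_add[OF mult_carrier_mat[OF Sc Hc] mult_carrier_mat[OF Hc Tc] v] v
    by (simp add: qform_def)
  then have "complex_of_real lam * (qform S v + cnj (qform T v)) = 0"
    using SH HT by (simp add: distrib_left)
  moreover have "qform S v = complex_of_real (Re (qform S v))" "qform T v = complex_of_real (Re (qform T v))"
    using qform_hermitian_real[OF psdD(1,2)[OF S] v] qform_hermitian_real[OF psdD(1,2)[OF T] v] .
  ultimately have "complex_of_real (lam * (Re (qform S v) + Re (qform T v))) = 0"
    by (metis complex_cnj_complex_of_real of_real_add of_real_mult)
  then show ?thesis by (simp only: of_real_eq_0_iff)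
qed

lemma psd_sqrt_unique:
  assumes S: "psd n S" and T: "psd n T" and ST: "S * S = T * T"
  shows "S = T"
proof -
  have Sc: "S \<in> carrier_mat n n" and Tc: "T \<in> carrier_mat n n"
    using S T by (simp_all add: psdD)
  obtain V lam where V: "unitary n V" and H: "S - T = spectral_mat n V lam"
    using hermitian_spectral_decomposition[OF minus_carrier_mat[OF Tc]
        hermitian_minus[OF Sc Tc psdD(2)[OF S] psdD(2)[OF T]]] .
  have "lam k = 0" if k: "k < n" for k
  proof -
    have v: "col V k \<in> carrier_vec n"
      using k unitary_carrier_mat[OF V] by simp
    have "lam k * (Re (qform S (col V k)) + Re (qform T (col V k))) = 0"
      using eigenvalue_mult_qform_eq_0_of_equal_squares[OF S T ST v] spectral_mat_mult_col[OF V k] H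
      by simp
    moreover have "complex_of_real (lam k) = qform S (col V k) - qform T (col V k)"
      using qform_spectral_mat_col[OF V k, of lam] qform_minus[OF Sc Tc v] H by simp
    then have "lam k = Re (qform S (col V k)) - Re (qform T (col V k))"
      by (metis Re_complex_of_real minus_complex.simps(1))
    moreover have "0 \<le> Re (qform S (col V k))" "0 \<le> Re (qform T (col V k))"
      using psdD(3)[OF S v] psdD(3)[OF T v] .
    ultimately show ?thesis by auto
  qed
  then have "S - T = 0\<^sub>m n n"
    using H spectral_mat_cong[of n lam "\<lambda>_. 0" V] by (simp add: spectral_mat_zero)
  show ?thesis
  proof (rule eq_matI)
    fix i j assume "i < dim_row T" "j < dim_col T"
    then have "(S - T) $$ (i, j) = 0"
      using \<open>S - T = 0\<^sub>m n n\<close> Tc by simp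
    then show "S $$ (i, j) = T $$ (i, j)"
      using \<open>i < dim_row T\<close> \<open>j < dim_col T\<close> Sc Tc by simp
  qed (use Sc Tc in auto)
qed

lemma msqrt_spectral_mat:
  assumes U: "unitary n U"
  shows "msqrt n (adj (spectral_mat n U d) * spectral_mat n U d) = spectral_mat n U (\<lambda>l. \<bar>d l\<bar>)"
  unfolding msqrt_def
proof (rule the_equality)
  have "adj (spectral_mat n U d) = spectral_mat n U d"
    using spectral_mat_hermitian unfolding hermitian_def by metis
  then have sq: "spectral_mat n U (\<lambda>l. \<bar>d l\<bar>) * spectral_mat n U (\<lambda>l. \<bar>d l\<bar>) =
      adj (spectral_mat n U d) * spectral_mat n U d"
    by (simp add: spectral_mat_mult[OF U] abs_mult_self_eq)
  have psd: "psd n (spectral_mat n U (\<lambda>l. \<bar>d l\<bar>))"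
    by (rule psd_spectral_mat[OF U]) simp
  show "psd n (spectral_mat n U (\<lambda>l. \<bar>d l\<bar>)) \<and>
      spectral_mat n U (\<lambda>l. \<bar>d l\<bar>) * spectral_mat n U (\<lambda>l. \<bar>d l\<bar>) = adj (spectral_mat n U d) * spectral_mat n U d"
    using psd sq by simp
  fix S assume "psd n S \<and> S * S = adj (spectral_mat n U d) * spectral_mat n U d"
  then show "S = spectral_mat n U (\<lambda>l. \<bar>d l\<bar>)"
    using psd_sqrt_unique[OF _ psd] sq by auto
qed

lemma trace_norm_spectral_mat:
  assumes U: "unitary n U"
  shows "trace_norm n (spectral_mat n U d) = (\<Sum>l<n. \<bar>d l\<bar>)"
  unfolding trace_norm_def msqrt_spectral_mat[OF U] mtrace_spectral_mat[OF U] by simp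

lemma trace_norm_smult_hermitian:
  assumes "Z \<in> carrier_mat n n" "hermitian Z" "0 \<le> c"
  shows "trace_norm n (complex_of_real c \<cdot>\<^sub>m Z) = c * trace_norm n Z"
proof -
  obtain V z where V: "unitary n V" and Z: "Z = spectral_mat n V z"
    using hermitian_spectral_decomposition[OF assms(1,2)] .
  show ?thesis
    unfolding Z spectral_mat_smult trace_norm_spectral_mat[OF V]
    using assms(3) by (simp add: abs_mult sum_distrib_left)
qed

lemma psd_orthogonal_square_add_eq_square_diff:
  assumes P: "psd n P" and Q: "psd n Q" and PQ: "P * Q = 0\<^sub>m n n"
  shows "(P + Q) * (P + Q) = (P - Q) * (P - Q)"
proof -
  have Pc: "P \<in> carrier_mat n n" and Qc: "Q \<in> carrier_mat n n"
    using P Q by (simp_all add: psdD)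
  have "Q * P = adj (P * Q)"
    using adj_mult[OF Pc Qc] psdD(2)[OF P] psdD(2)[OF Q] unfolding hermitian_def by metis
  then have QP: "Q * P = 0\<^sub>m n n"
    using PQ by simp
  have "(P + Q) * (P + Q) = (P * P + P * Q) + (Q * P + Q * Q)"
    unfolding add_mult_distrib_mat[OF Pc Qc add_carrier_mat[OF Qc]] mult_add_distrib_mat[OF Pc Pc Qc]
      mult_add_distrib_mat[OF Qc Pc Qc] ..
  also have "\<dots> = (P * P - P * Q) - (Q * P - Q * Q)"
    by (rule eq_matI) (use Pc Qc PQ QP in auto)
  also have "\<dots> = (P - Q) * (P - Q)"
    unfolding minus_mult_distrib_mat[OF Pc Qc minus_carrier_mat[OF Qc]] mult_minus_distrib_mat[OF Pc Pc Qc]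
      mult_minus_distrib_mat[OF Qc Pc Qc] ..
  finally show ?thesis .
qed

lemma pos_part_spectral_mat:
  assumes U: "unitary n U"
  shows "pos_part n (spectral_mat n U d) = spectral_mat n U (\<lambda>l. max (d l) 0)"
  unfolding pos_part_def
proof (rule the_equality)
  let ?X = "spectral_mat n U d" and ?P = "spectral_mat n U (\<lambda>l. max (d l) 0)"
  have PX: "?P - ?X = spectral_mat n U (\<lambda>l. max (d l) 0 - d l)"
    by (rule spectral_mat_minus)
  have "?P * (?P - ?X) = spectral_mat n U (\<lambda>l. 0)"
    unfolding PX spectral_mat_mult[OF U] by (rule spectral_mat_cong) (simp add: max_def)
  then show "psd n ?P \<and> psd n (?P - ?X) \<and> ?P * (?P - ?X) = 0\<^sub>m n n"
    unfolding PX by (auto intro!: psd_spectral_mat[OF U] simp: spectral_mat_zero)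
  fix P assume "psd n P \<and> psd n (P - ?X) \<and> P * (P - ?X) = 0\<^sub>m n n"
  then have P: "psd n P" and Q: "psd n (P - ?X)" and PQ: "P * (P - ?X) = 0\<^sub>m n n"
    by auto
  have Pc: "P \<in> carrier_mat n n" using P by (rule psdD)
  have "P + (P - ?X) = spectral_mat n U (\<lambda>l. \<bar>d l\<bar>)"
  proof (rule psd_sqrt_unique[OF psd_add[OF P Q]])
    show "psd n (spectral_mat n U (\<lambda>l. \<bar>d l\<bar>))"
      by (rule psd_spectral_mat[OF U]) simp
    have "P - (P - ?X) = ?X"
      using Pc by (intro eq_matI) auto
    then show "(P + (P - ?X)) * (P + (P - ?X)) = spectral_mat n U (\<lambda>l. \<bar>d l\<bar>) * spectral_mat n U (\<lambda>l. \<bar>d l\<bar>)"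
      by (simp add: psd_orthogonal_square_add_eq_square_diff[OF P Q PQ] spectral_mat_mult[OF U]
          abs_mult_self_eq)
  qed
  then have "P + (P - ?X) + ?X = spectral_mat n U (\<lambda>l. \<bar>d l\<bar> + d l)"
    by (simp add: spectral_mat_add)
  also have "\<dots> = complex_of_real 2 \<cdot>\<^sub>m ?P"
    by (subst spectral_mat_smult) (rule spectral_mat_cong, simp add: max_def)
  finally have sum: "P + (P - ?X) + ?X = complex_of_real 2 \<cdot>\<^sub>m ?P" .
  show "P = ?P"
  proof (rule eq_matI)
    fix i j assume ij: "i < dim_row ?P" "j < dim_col ?P"
    then have "(P + (P - ?X) + ?X) $$ (i, j) = (complex_of_real 2 \<cdot>\<^sub>m ?P) $$ (i, j)"
      using sum by simp
    then show "P $$ (i, j) = ?P $$ (i, j)"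
      using Pc ij by simp
  qed (use Pc in auto)
qed

lemma qform_nonpos_of_trace_pos_part_eq_0:
  assumes X: "X \<in> carrier_mat n n" "hermitian X" and E: "Re (mtrace (pos_part n X)) = 0"
    and v: "v \<in> carrier_vec n"
  shows "Re (qform X v) \<le> 0"
proof -
  obtain U d where U: "unitary n U" and Xsp: "X = spectral_mat n U d"
    using hermitian_spectral_decomposition[OF X] .
  have "(\<Sum>l<n. max (d l) 0) = 0"
    using E unfolding Xsp pos_part_spectral_mat[OF U] mtrace_spectral_mat[OF U] by simp
  then have "\<forall>l\<in>{..<n}. max (d l) 0 = 0"
    by (subst sum_nonneg_eq_0_iff[symmetric]) auto
  then have "d l \<le> 0" if "l < n" for l
    using that by (metis lessThan_iff max.cobounded1)
  then show ?thesis
    unfolding Xsp qform_spectral_mat[OF unitary_carrier_mat[OF U] v]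
    by (intro sum_nonpos mult_nonpos_nonneg) auto
qed

section \<open>Channels and local differential privacy\<close>

lemma density_psd: "density n \<rho> \<Longrightarrow> psd n \<rho>"
  by (simp add: density_def)

lemma density_carrier_mat: "density n \<rho> \<Longrightarrow> \<rho> \<in> carrier_mat n n"
  by (simp add: density_def psdD)

lemma density_hermitian: "density n \<rho> \<Longrightarrow> hermitian \<rho>"
  unfolding density_def using psdD(2) by blast

lemma density_trace: "density n \<rho> \<Longrightarrow> mtrace \<rho> = 1"
  by (simp add: density_def)

lemma channel_carrier_mat: "channel n m A \<Longrightarrow> X \<in> carrier_mat n n \<Longrightarrow> A X \<in> carrier_mat m m"
  unfolding channel_def by blast

lemma channel_add:
  "channel n m A \<Longrightarrow> X \<in> carrier_mat n n \<Longrightarrow> Y \<in> carrier_mat n n \<Longrightarrow> A (X + Y) = A X + A Y"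
  unfolding channel_def by blast

lemma channel_smult: "channel n m A \<Longrightarrow> X \<in> carrier_mat n n \<Longrightarrow> A (c \<cdot>\<^sub>m X) = c \<cdot>\<^sub>m A X"
  unfolding channel_def by blast

lemma channel_trace: "channel n m A \<Longrightarrow> X \<in> carrier_mat n n \<Longrightarrow> mtrace (A X) = mtrace X"
  unfolding channel_def by blast

lemma channel_minus:
  assumes A: "channel n m A" and X: "X \<in> carrier_mat n n" and Y: "Y \<in> carrier_mat n n"
  shows "A (X - Y) = A X - A Y"
proof -
  have XY: "X - Y \<in> carrier_mat n n" using Y by (rule minus_carrier_mat)
  have "X = (X - Y) + Y"
    by (rule eq_matI) (use X Y in auto)
  then have "A X = A (X - Y) + A Y"
    using channel_add[OF A XY Y] by metis
  then show ?thesis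
    using channel_carrier_mat[OF A XY] channel_carrier_mat[OF A Y] by (intro eq_matI) auto
qed

lemma channel_psd:
  assumes A: "channel n m A" and P: "psd n P"
  shows "psd m (A P)"
proof -
  have Pc: "P \<in> carrier_mat n n" using P by (rule psdD)
  have "ampl 1 n m A P = mat m m (\<lambda>(r, c). A (blk n P 0 0) $$ (r, c))"
    unfolding ampl_def by (rule eq_matI) auto
  also have "blk n P 0 0 = P"
    unfolding blk_def by (rule eq_matI) (use Pc in auto)
  also have "mat m m (\<lambda>(r, c). A P $$ (r, c)) = A P"
    by (rule eq_matI) (use channel_carrier_mat[OF A Pc] in auto)
  finally have "ampl 1 n m A P = A P" .
  moreover have "\<forall>k X. psd (k * n) X \<longrightarrow> psd (k * m) (ampl k n m A X)"
    using A unfolding channel_def by blast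
  then have "psd (1 * m) (ampl 1 n m A P)"
    using P by (metis mult_1)
  ultimately show ?thesis by simp
qed

lemma channel_density: "channel n m A \<Longrightarrow> density n \<rho> \<Longrightarrow> density m (A \<rho>)"
  by (simp add: density_def channel_psd channel_trace psdD)

lemma LDP_qform_le:
  assumes L: "LDP n m \<epsilon> A" and \<rho>: "density n \<rho>" and \<sigma>: "density n \<sigma>" and v: "v \<in> carrier_vec m"
  shows "Re (qform (A \<rho>) v) \<le> exp \<epsilon> * Re (qform (A \<sigma>) v)"
proof -
  have A: "channel n m A" using L by (simp add: LDP_def)
  have p1: "psd m (A \<rho>)" and p2: "psd m (A \<sigma>)"
    using channel_density[OF A] \<rho> \<sigma> by (simp_all add: density_psd)
  have c1: "A \<rho> \<in> carrier_mat m m" and c2: "complex_of_real (exp \<epsilon>) \<cdot>\<^sub>m A \<sigma> \<in> carrier_mat m m"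
    using p1 p2 by (simp_all add: psdD)
  define Y where "Y = A \<rho> - complex_of_real (exp \<epsilon>) \<cdot>\<^sub>m A \<sigma>"
  have "Re (qform Y v) \<le> 0"
  proof (rule qform_nonpos_of_trace_pos_part_eq_0[OF _ _ _ v])
    show "Y \<in> carrier_mat m m" unfolding Y_def using c2 by (rule minus_carrier_mat)
    show "hermitian Y"
      unfolding Y_def using c1 c2 psdD(2)[OF p1] hermitian_smult_real[OF psdD(2)[OF p2]]
      by (rule hermitian_minus)
    show "Re (mtrace (pos_part m Y)) = 0"
      using L \<rho> \<sigma> by (simp add: LDP_def E_gamma_def Y_def)
  qed
  moreover have "qform Y v = qform (A \<rho>) v - complex_of_real (exp \<epsilon>) * qform (A \<sigma>) v"
    unfolding Y_def qform_minus[OF c1 c2 v] qform_smult[OF psdD(1)[OF p2] v] ..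
  ultimately show ?thesis by simp
qed

section \<open>The contraction bound\<close>

text \<open>With \<open>S = {l. b l < a l}\<close> the left-hand side is \<open>2 (a(S) - b(S))\<close>, while \<open>a(S) \<le> g b(S)\<close> and
  \<open>1 - b(S) \<le> g (1 - a(S))\<close>.\<close>

lemma sum_abs_diff_le_of_ratio_bounded:
  fixes a b :: "nat \<Rightarrow> real" and g :: real
  assumes g: "1 \<le> g"
    and ab: "\<And>l. l < m \<Longrightarrow> a l \<le> g * b l" and ba: "\<And>l. l < m \<Longrightarrow> b l \<le> g * a l"
    and sa: "(\<Sum>l<m. a l) = 1" and sb: "(\<Sum>l<m. b l) = 1"
  shows "(\<Sum>l<m. \<bar>a l - b l\<bar>) \<le> 2 * ((g - 1) / (g + 1))"
proof -
  define aS where "aS l = (if b l < a l then a l else 0)" for l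
  define bS where "bS l = (if b l < a l then b l else 0)" for l
  have S: "(\<Sum>l<m. aS l) \<le> g * (\<Sum>l<m. bS l)"
    unfolding sum_distrib_left by (rule sum_mono) (use ab in \<open>auto simp: aS_def bS_def\<close>)
  have "(\<Sum>l<m. b l - bS l) \<le> g * (\<Sum>l<m. a l - aS l)"
    unfolding sum_distrib_left by (rule sum_mono) (use ba in \<open>auto simp: aS_def bS_def\<close>)
  then have S': "1 - (\<Sum>l<m. bS l) \<le> g * (1 - (\<Sum>l<m. aS l))"
    using sa sb by (simp add: sum_subtractf)
  have "\<bar>a l - b l\<bar> = 2 * (aS l - bS l) - (a l - b l)" for l
    by (simp add: aS_def bS_def)
  then have tv: "(\<Sum>l<m. \<bar>a l - b l\<bar>) = 2 * ((\<Sum>l<m. aS l) - (\<Sum>l<m. bS l))"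
    using sa sb by (simp add: sum_subtractf sum_distrib_left[symmetric])
  have "(g + 1) * ((\<Sum>l<m. aS l) - (\<Sum>l<m. bS l)) \<le> g - 1"
    using S S' by (simp add: algebra_simps)
  then have "(\<Sum>l<m. aS l) - (\<Sum>l<m. bS l) \<le> (g - 1) / (g + 1)"
    using g by (simp add: field_simps)
  then show ?thesis unfolding tv by (rule mult_left_mono) simp
qed

lemma sum_qform_unitary_cols:
  assumes V: "unitary n V" and M: "M \<in> carrier_mat n n"
  shows "(\<Sum>l<n. qform M (col V l)) = mtrace M"
proof -
  have Vc: "V \<in> carrier_mat n n" using V by (rule unitary_carrier_mat)
  have "(\<Sum>l<n. qform M (col V l)) = (\<Sum>l<n. \<Sum>i<n. \<Sum>j<n. cnj (V $$ (i, l)) * M $$ (i, j) * V $$ (j, l))"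
  proof (intro sum.cong refl)
    fix l assume "l \<in> {..<n}"
    then show "qform M (col V l) = (\<Sum>i<n. \<Sum>j<n. cnj (V $$ (i, l)) * M $$ (i, j) * V $$ (j, l))"
      using Vc by (subst qform_sum[OF M]) (auto simp: sum_distrib_left mult.assoc intro!: sum.cong)
  qed
  also have "\<dots> = (\<Sum>i<n. \<Sum>j<n. M $$ (i, j) * (\<Sum>l<n. V $$ (j, l) * cnj (V $$ (i, l))))"
    by (subst sum_rotate3) (simp add: sum_distrib_left algebra_simps)
  also have "\<dots> = (\<Sum>i<n. M $$ (i, i))"
    by (intro sum.cong refl)
      (simp add: unitary_orthonormal_rows[OF V] if_distrib[of "(*) _"] sum.delta sum.delta' cong: if_cong)
  also have "\<dots> = mtrace M"
    using M by (simp add: mtrace_def)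
  finally show ?thesis .
qed

lemma trace_norm_hermitian_nonneg:
  assumes "X \<in> carrier_mat n n" "hermitian X"
  shows "0 \<le> trace_norm n X"
proof -
  obtain U d where "unitary n U" "X = spectral_mat n U d"
    using hermitian_spectral_decomposition[OF assms] .
  then show ?thesis by (simp add: trace_norm_spectral_mat sum_nonneg)
qed

text \<open>\<open>\<omega>\<^sub>1\<close> and \<open>\<omega>\<^sub>2\<close> are the normalised positive and negative parts of \<open>X\<close>; as \<open>X\<close> is
  traceless, both parts have trace half the trace norm.\<close>

lemma traceless_hermitian_eq_scaled_density_diff:
  assumes X: "X \<in> carrier_mat n n" "hermitian X" and tr: "mtrace X = 0" and X0: "trace_norm n X \<noteq> 0"
  obtains \<omega>\<^sub>1 \<omega>\<^sub>2 where "density n \<omega>\<^sub>1" "density n \<omega>\<^sub>2"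
    "X = complex_of_real (trace_norm n X / 2) \<cdot>\<^sub>m (\<omega>\<^sub>1 - \<omega>\<^sub>2)"
proof -
  obtain U d where U: "unitary n U" and Xsp: "X = spectral_mat n U d"
    using hermitian_spectral_decomposition[OF X] .
  have sd: "(\<Sum>l<n. d l) = 0"
    using tr unfolding Xsp mtrace_spectral_mat[OF U] by (simp only: of_real_eq_0_iff)
  define t where "t = (\<Sum>l<n. max (d l) 0)"
  have "trace_norm n X = (\<Sum>l<n. 2 * max (d l) 0 - d l)"
    unfolding Xsp trace_norm_spectral_mat[OF U] by (intro sum.cong refl) (simp add: max_def)
  then have tn: "trace_norm n X = 2 * t"
    using sd by (simp add: sum_subtractf sum_distrib_left t_def)
  have t: "0 < t"
    using X0 tn sum_nonneg[of "{..<n}" "\<lambda>l. max (d l) 0"] by (simp add: t_def)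
  define \<omega>\<^sub>1 where "\<omega>\<^sub>1 = spectral_mat n U (\<lambda>l. max (d l) 0 / t)"
  define \<omega>\<^sub>2 where "\<omega>\<^sub>2 = spectral_mat n U (\<lambda>l. max (- d l) 0 / t)"
  have "density n \<omega>\<^sub>1"
    unfolding density_def \<omega>\<^sub>1_def mtrace_spectral_mat[OF U]
    using t by (auto intro!: psd_spectral_mat[OF U] simp: sum_divide_distrib[symmetric] t_def)
  moreover have "(\<Sum>l<n. max (- d l) 0) = (\<Sum>l<n. max (d l) 0 - d l)"
    by (intro sum.cong refl) (simp add: max_def)
  then have "density n \<omega>\<^sub>2"
    unfolding density_def \<omega>\<^sub>2_def mtrace_spectral_mat[OF U]
    using t sd by (auto intro!: psd_spectral_mat[OF U] simp: sum_divide_distrib[symmetric] sum_subtractf t_def)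
  moreover have "X = complex_of_real t \<cdot>\<^sub>m (\<omega>\<^sub>1 - \<omega>\<^sub>2)"
    unfolding Xsp \<omega>\<^sub>1_def \<omega>\<^sub>2_def spectral_mat_minus spectral_mat_smult
    using t by (intro spectral_mat_cong) (simp add: max_def field_simps)
  ultimately show ?thesis
    using that tn by simp
qed

lemma LDP_trace_norm_density_diff_le:
  assumes \<epsilon>: "0 \<le> \<epsilon>" and L: "LDP n m \<epsilon> A" and \<omega>\<^sub>1: "density n \<omega>\<^sub>1" and \<omega>\<^sub>2: "density n \<omega>\<^sub>2"
  shows "trace_norm m (A \<omega>\<^sub>1 - A \<omega>\<^sub>2) \<le> 2 * ((exp \<epsilon> - 1) / (exp \<epsilon> + 1))"
proof -
  have A: "channel n m A" using L by (simp add: LDP_def)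
  have d1: "density m (A \<omega>\<^sub>1)" and d2: "density m (A \<omega>\<^sub>2)"
    using channel_density[OF A] \<omega>\<^sub>1 \<omega>\<^sub>2 by auto
  have c1: "A \<omega>\<^sub>1 \<in> carrier_mat m m" and c2: "A \<omega>\<^sub>2 \<in> carrier_mat m m"
    using d1 d2 by (simp_all add: density_carrier_mat)
  have "hermitian (A \<omega>\<^sub>1 - A \<omega>\<^sub>2)"
    by (rule hermitian_minus[OF c1 c2 density_hermitian[OF d1] density_hermitian[OF d2]])
  then obtain V z where V: "unitary m V" and Z: "A \<omega>\<^sub>1 - A \<omega>\<^sub>2 = spectral_mat m V z"
    using hermitian_spectral_decomposition minus_carrier_mat[OF c2] by blast
  define a where "a l = Re (qform (A \<omega>\<^sub>1) (col V l))" for l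
  define b where "b l = Re (qform (A \<omega>\<^sub>2) (col V l))" for l
  have "z l = a l - b l" if l: "l < m" for l
  proof -
    have "complex_of_real (z l) = qform (A \<omega>\<^sub>1) (col V l) - qform (A \<omega>\<^sub>2) (col V l)"
      using qform_spectral_mat_col[OF V l, of z, folded Z] l unitary_carrier_mat[OF V]
      by (simp add: qform_minus[OF c1 c2])
    then show ?thesis
      unfolding a_def b_def by (metis Re_complex_of_real minus_complex.simps(1))
  qed
  then have "trace_norm m (A \<omega>\<^sub>1 - A \<omega>\<^sub>2) = (\<Sum>l<m. \<bar>a l - b l\<bar>)"
    unfolding Z trace_norm_spectral_mat[OF V] by simp
  also have "\<dots> \<le> 2 * ((exp \<epsilon> - 1) / (exp \<epsilon> + 1))"
  proof (rule sum_abs_diff_le_of_ratio_bounded)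
    show "1 \<le> exp \<epsilon>" using \<epsilon> by simp
    show "a l \<le> exp \<epsilon> * b l" "b l \<le> exp \<epsilon> * a l" if "l < m" for l
      unfolding a_def b_def using LDP_qform_le[OF L] \<omega>\<^sub>1 \<omega>\<^sub>2 that unitary_carrier_mat[OF V] by simp_all
    show "(\<Sum>l<m. a l) = 1" "(\<Sum>l<m. b l) = 1"
      unfolding a_def b_def using sum_qform_unitary_cols[OF V] c1 c2 d1 d2
      by (simp_all flip: Re_sum add: density_trace)
  qed
  finally show ?thesis .
qed

lemma LDP_trace_norm_ratio_le:
  assumes \<epsilon>: "0 \<le> \<epsilon>" and L: "LDP n m \<epsilon> A" and \<rho>: "density n \<rho>" and \<sigma>: "density n \<sigma>"
  shows "trace_norm m (A \<rho> - A \<sigma>) / trace_norm n (\<rho> - \<sigma>) \<le> (exp \<epsilon> - 1) / (exp \<epsilon> + 1)"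
proof (cases "trace_norm n (\<rho> - \<sigma>) = 0")
  case True
  \<comment> \<open>the quotient is \<open>0\<close> by the convention \<open>x / 0 = 0\<close>\<close>
  then show ?thesis using \<epsilon> by simp
next
  case False
  have A: "channel n m A" using L by (simp add: LDP_def)
  have c\<rho>: "\<rho> \<in> carrier_mat n n" and c\<sigma>: "\<sigma> \<in> carrier_mat n n"
    using \<rho> \<sigma> by (simp_all add: density_carrier_mat)
  define X where "X = \<rho> - \<sigma>"
  have X: "X \<in> carrier_mat n n" "hermitian X"
    unfolding X_def using minus_carrier_mat[OF c\<sigma>]
      hermitian_minus[OF c\<rho> c\<sigma> density_hermitian[OF \<rho>] density_hermitian[OF \<sigma>]] by auto
  have "mtrace X = 0"
    using \<rho> \<sigma> by (simp add: X_def mtrace_minus[OF c\<rho> c\<sigma>] density_trace)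
  then obtain \<omega>\<^sub>1 \<omega>\<^sub>2 where \<omega>: "density n \<omega>\<^sub>1" "density n \<omega>\<^sub>2"
    and X\<omega>: "X = complex_of_real (trace_norm n X / 2) \<cdot>\<^sub>m (\<omega>\<^sub>1 - \<omega>\<^sub>2)"
    using traceless_hermitian_eq_scaled_density_diff[OF X] False by (auto simp: X_def)
  define t where "t = trace_norm n X / 2"
  have t: "0 < t" and tn: "trace_norm n (\<rho> - \<sigma>) = 2 * t"
    using False trace_norm_hermitian_nonneg[OF X] by (simp_all add: t_def X_def)
  have c\<omega>: "\<omega>\<^sub>1 - \<omega>\<^sub>2 \<in> carrier_mat n n"
    using minus_carrier_mat[OF density_carrier_mat[OF \<omega>(2)]] .
  have A\<omega>: "density m (A \<omega>\<^sub>1)" "density m (A \<omega>\<^sub>2)"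
    using channel_density[OF A] \<omega> by auto
  have "A \<rho> - A \<sigma> = A X"
    using channel_minus[OF A c\<rho> c\<sigma>] by (simp add: X_def)
  also have "\<dots> = A (complex_of_real t \<cdot>\<^sub>m (\<omega>\<^sub>1 - \<omega>\<^sub>2))"
    using arg_cong[OF X\<omega>, of A] unfolding t_def .
  also have "\<dots> = complex_of_real t \<cdot>\<^sub>m (A \<omega>\<^sub>1 - A \<omega>\<^sub>2)"
    using channel_smult[OF A c\<omega>] channel_minus[OF A] \<omega> by (simp add: density_carrier_mat)
  finally have "trace_norm m (A \<rho> - A \<sigma>) = t * trace_norm m (A \<omega>\<^sub>1 - A \<omega>\<^sub>2)"
    using trace_norm_smult_hermitian[OF minus_carrier_mat[OF density_carrier_mat[OF A\<omega>(2)]]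
        hermitian_minus[OF density_carrier_mat[OF A\<omega>(1)] density_carrier_mat[OF A\<omega>(2)]
          density_hermitian[OF A\<omega>(1)] density_hermitian[OF A\<omega>(2)]] less_imp_le[OF t]]
    by simp
  also have "\<dots> \<le> t * (2 * ((exp \<epsilon> - 1) / (exp \<epsilon> + 1)))"
    using LDP_trace_norm_density_diff_le[OF \<epsilon> L \<omega>] less_imp_le[OF t] by (rule mult_left_mono)
  finally show ?thesis
    using t tn by (simp add: field_simps)
qed

theorem mainTheorem12:
  fixes n m :: nat and \<epsilon> :: real and A :: "complex mat \<Rightarrow> complex mat"
  assumes "0 \<le> \<epsilon>" and "LDP n m \<epsilon> A"
  shows "eta_tr n m A \<le> ereal ((exp \<epsilon> - 1) / (exp \<epsilon> + 1))"
  unfolding eta_tr_def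
  using LDP_trace_norm_ratio_le[OF assms] by (auto intro!: SUP_least)

end
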